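(* Let $G$ be a finite group and let $V=\{1,v_1,v_2,v_3\}$ be a four-group acting on $G$ by automorphisms with $C_G(V)=1$. Put $G_3=C_G(v_3)$. Suppose that $N$ is a normal subgroup of $G$ such that $N\leq G_3$. Then $N\leq Z(G)$.
   Context: $C_G(V)$ is the subgroup of elements fixed by all of $V$, $C_G(v_3)$ the subgroup fixed by $v_3$, and $Z(G)$ the center of $G$. *)

theory Defs
  imports "HOL-Algebra.Algebra"
begin

definition fixed_points :: "('g, 'c) monoid_scheme \<Rightarrow> ('v \<Rightarrow> 'g \<Rightarrow> 'g) \<Rightarrow> 'v set \<Rightarrow> 'g set" where
  "fixed_points G \<phi> S = {g \<in> carrier G. \<forall>v\<in>S. \<phi> v g = g}"

definition group_center :: "('g, 'c) monoid_scheme \<Rightarrow> 'g set" where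
  "group_center G = {z \<in> carrier G. \<forall>x\<in>carrier G. z \<otimes>\<^bsub>G\<^esub> x = x \<otimes>\<^bsub>G\<^esub> z}"

end

theory Submission
  imports Defs "HOL-Library.Z2" "HOL-Library.Disjoint_Sets"
begin

text \<open>
  Write a and b for the automorphisms induced by v1 and v2, so that ab is induced by v3 and 1
  is the only common fixed point of a and b. Pairing points with their images shows that an
  involution has as many fixed points as the set has elements, modulo 2; applied to a and then
  to b on the fixed points of a, this makes |G| odd and forces 1 into every a- and b-stable set
  of odd size. On C_G(ab) the automorphism a has no nontrivial fixed point, so x \<mapsto> x\<inverse> a(x) is a
  bijection of C_G(ab), and a, hence also b, inverts C_G(ab). For n in N all conjugates of n
  lie in N \<le> C_G(ab) and are inverted by a and b, which makes the fibre
  {x. x\<inverse> n x = g\<inverse> n g} stable under a and b. This fibre is a coset of the centralizer of n,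
  so its size divides |G| and is odd; hence it contains 1, i.e. g commutes with n.
\<close>

lemma even_card_non_fixed_points_involution:
  assumes "\<And>x. x \<in> S \<Longrightarrow> s x \<in> S" "\<And>x. x \<in> S \<Longrightarrow> s (s x) = x"
  shows "even (card {x\<in>S. s x \<noteq> x})"
proof -
  \<comment> \<open>Counted in the two-element field, each orbit {x, s x} contributes 1 + 1 = 0.\<close>
  have "(\<Sum>x\<in>{x\<in>S. s x \<noteq> x}. 1 :: bit) = 0"
    by (rule sum_involution_eq_0[where h = s]) (use assms in auto)
  then have "(of_nat (card {x\<in>S. s x \<noteq> x}) :: bit) = 0"
    by simp
  then show ?thesis
    by (metis even_of_nat_iff even_zero)
qed

lemma odd_card_iff_odd_card_fixed_points_involution:
  assumes "finite S" "\<And>x. x \<in> S \<Longrightarrow> s x \<in> S" "\<And>x. x \<in> S \<Longrightarrow> s (s x) = x"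
  shows "odd (card S) \<longleftrightarrow> odd (card {x\<in>S. s x = x})"
proof -
  have "card S = card {x\<in>S. s x = x} + card {x\<in>S. s x \<noteq> x}"
    using assms(1) by (subst card_Un_disjoint[symmetric]) (auto intro: arg_cong[where f = card])
  then show ?thesis
    using even_card_non_fixed_points_involution[OF assms(2,3)] by simp
qed

lemma odd_card_iff_odd_card_common_fixed_point_eq_ones:
  assumes "finite S"
    and "\<And>x. x \<in> S \<Longrightarrow> s x \<in> S" "\<And>x. x \<in> S \<Longrightarrow> s (s x) = x"
    and "\<And>x. x \<in> S \<Longrightarrow> t x \<in> S" "\<And>x. x \<in> S \<Longrightarrow> t (t x) = x"
    and "\<And>x. x \<in> S \<Longrightarrow> s (t x) = t (s x)"
  shows "odd (card S) \<longleftrightarrow> odd (card {x\<in>S. s x = x \<and> t x = x})"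
proof -
  have "odd (card S) \<longleftrightarrow> odd (card {x\<in>S. s x = x})"
    using assms(1-3) by (rule odd_card_iff_odd_card_fixed_points_involution)
  also have "\<dots> \<longleftrightarrow> odd (card {x\<in>{x\<in>S. s x = x}. t x = x})"
    using assms by (intro odd_card_iff_odd_card_fixed_points_involution) auto
  finally show ?thesis
    by simp
qed

lemma (in group) inverts_subgroup_if_fixed_point_free_involution:
  assumes "a \<in> hom G G" "subgroup K G" "finite K" "a ` K \<subseteq> K"
    and "\<And>x. x \<in> K \<Longrightarrow> a (a x) = x"
    and "\<And>x. x \<in> K \<Longrightarrow> a x = x \<Longrightarrow> x = \<one>"
    and "k \<in> K"
  shows "a k = inv k"
proof -
  interpret a: group_hom G G a
    using assms(1) by (simp add: group_hom_def group_hom_axioms_def is_group)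
  interpret K: subgroup K G by fact
  define F where "F x = inv x \<otimes> a x" for x
  have F_into: "F ` K \<subseteq> K"
    using assms(4) by (auto simp: F_def)
  have "inj_on F K"
  proof (rule inj_onI)
    fix x y assume x: "x \<in> K" and y: "y \<in> K" and "F x = F y"
    then have "y \<otimes> inv x \<otimes> a x = a y"
      using x y by (simp add: F_def m_assoc flip: inv_solve_left')
    then have "y \<otimes> inv x = a y \<otimes> inv (a x)"
      using x y by (simp add: inv_solve_right)
    also have "\<dots> = a (y \<otimes> inv x)"
      using x y by simp
    finally have "a (y \<otimes> inv x) = y \<otimes> inv x"
      by (rule sym)
    then have "y \<otimes> inv x = \<one>"
      using x y assms(6) by blast
    then show "x = y"
      using x y by (simp add: inv_solve_right')
  qed
  then have "F ` K = K"
    using endo_inj_surj[OF assms(3) F_into] by blast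
  then obtain x where x: "x \<in> K" and k: "k = F x"
    using assms(7) by (metis imageE)
  then have "a k = inv (a x) \<otimes> x"
    using assms(5) by (simp add: F_def)
  also have "\<dots> = inv k"
    using x k by (simp add: F_def inv_mult_group)
  finally show ?thesis .
qed

definition centralizer :: "('g, 'c) monoid_scheme \<Rightarrow> 'g \<Rightarrow> 'g set" where
  "centralizer G n = {h \<in> carrier G. h \<otimes>\<^bsub>G\<^esub> n = n \<otimes>\<^bsub>G\<^esub> h}"

lemma (in group) subgroup_centralizer:
  assumes "n \<in> carrier G"
  shows "subgroup (centralizer G n) G"
proof (rule subgroupI)
  fix x y assume "x \<in> centralizer G n" "y \<in> centralizer G n"
  then have x: "x \<in> carrier G" "x \<otimes> n = n \<otimes> x" and y: "y \<in> carrier G" "y \<otimes> n = n \<otimes> y"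
    by (simp_all add: centralizer_def)
  have "inv x \<otimes> n = n \<otimes> inv x"
    using x assms by (metis inv_closed inv_solve_left' inv_solve_right' m_assoc m_closed)
  then show "inv x \<in> centralizer G n"
    using x by (simp add: centralizer_def)
  have "x \<otimes> y \<otimes> n = n \<otimes> (x \<otimes> y)"
    using x y assms by (metis m_assoc)
  then show "x \<otimes> y \<in> centralizer G n"
    using x y by (simp add: centralizer_def)
qed (use assms in \<open>auto simp: centralizer_def\<close>)

lemma (in group) conj_eq_self_iff_commute:
  assumes "n \<in> carrier G" "y \<in> carrier G"
  shows "inv y \<otimes> n \<otimes> y = n \<longleftrightarrow> y \<otimes> n = n \<otimes> y"
  using assms by (metis inv_closed inv_solve_left m_assoc m_closed)

lemma (in group) conj_eq_conj_iff:
  assumes "n \<in> carrier G" "g \<in> carrier G" "x \<in> carrier G"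
  shows "inv x \<otimes> n \<otimes> x = inv g \<otimes> n \<otimes> g \<longleftrightarrow> inv (x \<otimes> inv g) \<otimes> n \<otimes> (x \<otimes> inv g) = n"
  using assms by (smt (verit) conjugation_is_surj inv_closed inv_inv inv_mult_group m_assoc m_closed)

lemma (in group) conjugate_fibre_eq_rcos_centralizer:
  assumes "n \<in> carrier G" "g \<in> carrier G"
  shows "{x \<in> carrier G. inv x \<otimes> n \<otimes> x = inv g \<otimes> n \<otimes> g} = centralizer G n #> g"
proof -
  interpret C: subgroup "centralizer G n" G
    using assms(1) by (rule subgroup_centralizer)
  have "x \<in> centralizer G n #> g \<longleftrightarrow> inv x \<otimes> n \<otimes> x = inv g \<otimes> n \<otimes> g"
    if x: "x \<in> carrier G" for x
  proof -
    have "x \<in> centralizer G n #> g \<longleftrightarrow> x \<otimes> inv g \<in> centralizer G n"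
      using C.rcos_module[OF is_group assms(2) x] .
    also have "\<dots> \<longleftrightarrow> inv (x \<otimes> inv g) \<otimes> n \<otimes> (x \<otimes> inv g) = n"
      using conj_eq_self_iff_commute[OF assms(1), of "x \<otimes> inv g"] assms x
      unfolding centralizer_def by blast
    also have "\<dots> \<longleftrightarrow> inv x \<otimes> n \<otimes> x = inv g \<otimes> n \<otimes> g"
      using conj_eq_conj_iff[OF assms x] by (rule sym)
    finally show ?thesis .
  qed
  then show ?thesis
    using C.elemrcos_carrier[OF is_group assms(2)] by blast
qed

lemma (in group) card_conjugate_fibre_dvd_order:
  assumes "n \<in> carrier G" "g \<in> carrier G"
  shows "card {x \<in> carrier G. inv x \<otimes> n \<otimes> x = inv g \<otimes> n \<otimes> g} dvd order G"
proof -
  interpret C: subgroup "centralizer G n" G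
    using assms(1) by (rule subgroup_centralizer)
  have "card (centralizer G n #> g) = card (centralizer G n)"
    using card_rcosets_equal[OF rcosetsI[OF C.subset assms(2)] C.subset] by (rule sym)
  also have "\<dots> dvd order G"
    unfolding lagrange[OF C.subgroup_axioms, symmetric] by (rule dvd_triv_right)
  finally show ?thesis
    unfolding conjugate_fibre_eq_rcos_centralizer[OF assms] .
qed

lemma (in group) conj_by_image_eq_if_inverts_conjugates:
  assumes "a \<in> hom G G" "n \<in> carrier G" "x \<in> carrier G"
    and "\<And>y. y \<in> carrier G \<Longrightarrow> a (inv y \<otimes> n \<otimes> y) = inv (inv y \<otimes> n \<otimes> y)"
  shows "inv (a x) \<otimes> n \<otimes> a x = inv x \<otimes> n \<otimes> x"
proof -
  interpret a: group_hom G G a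
    using assms(1) by (simp add: group_hom_def group_hom_axioms_def is_group)
  have "a n = inv n"
    using assms(2) assms(4)[of \<one>] by simp
  then have "inv (inv (a x) \<otimes> n \<otimes> a x) = a (inv x \<otimes> n \<otimes> x)"
    using assms(2,3) by (simp add: inv_mult_group m_assoc)
  also have "\<dots> = inv (inv x \<otimes> n \<otimes> x)"
    using assms(2-4) by simp
  finally show ?thesis
    using assms(2,3) by (metis inv_inv a.hom_closed inv_closed m_closed)
qed

lemma (in group) klein_four_mult_commute:
  assumes "carrier G = {\<one>, u, v, w}" "card (carrier G) = 4"
    and "u \<otimes> u = \<one>" "v \<otimes> v = \<one>" "u \<otimes> v = w"
  shows "v \<otimes> u = w"
proof -
  have distinct: "u \<noteq> \<one>" "v \<noteq> \<one>" "u \<noteq> v"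
    using assms(1,2) by (auto simp: card_insert_if split: if_splits)
  have uv: "u \<in> carrier G" "v \<in> carrier G"
    using assms(1) by auto
  have "v \<otimes> u \<noteq> \<one>"
    using uv assms(3) distinct(3) by (metis inv_equality)
  moreover have "v \<otimes> u \<noteq> u" "v \<otimes> u \<noteq> v"
    using uv distinct by (metis l_cancel_one' r_cancel_one')+
  moreover have "v \<otimes> u \<in> carrier G"
    using uv by simp
  ultimately show ?thesis
    using assms(1) by auto
qed

locale fixed_point_free_involutions = group G for G (structure) +
  fixes a b :: "'a \<Rightarrow> 'a"
  assumes finite_carrier: "finite (carrier G)"
    and a_hom: "a \<in> hom G G" and b_hom: "b \<in> hom G G"
    and a_involutive: "x \<in> carrier G \<Longrightarrow> a (a x) = x"
    and b_involutive: "x \<in> carrier G \<Longrightarrow> b (b x) = x"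
    and ab_commute: "x \<in> carrier G \<Longrightarrow> a (b x) = b (a x)"
    and common_fixed_point_eq_one: "x \<in> carrier G \<Longrightarrow> a x = x \<Longrightarrow> b x = x \<Longrightarrow> x = \<one>"
begin

sublocale a: group_hom G G a
  using a_hom by (simp add: group_hom_def group_hom_axioms_def is_group)

sublocale b: group_hom G G b
  using b_hom by (simp add: group_hom_def group_hom_axioms_def is_group)

lemma odd_order: "odd (order G)"
proof -
  have "{x \<in> carrier G. a x = x \<and> b x = x} = {\<one>}"
    using common_fixed_point_eq_one by auto
  then show ?thesis
    using odd_card_iff_odd_card_common_fixed_point_eq_ones[of "carrier G" a b]
    by (simp add: order_def finite_carrier a_involutive b_involutive ab_commute)
qed

lemma inverts_fixed_points_of_product:
  assumes "x \<in> carrier G" "a (b x) = x"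
  shows "a x = inv x" "b x = inv x"
proof -
  define K where "K = {x \<in> carrier G. a (b x) = x}"
  have K_subgroup: "subgroup K G"
  proof (rule subgroupI)
    show "K \<subseteq> carrier G" "K \<noteq> {}"
      by (auto simp: K_def)
  next
    fix y z assume "y \<in> K" "z \<in> K"
    then show "inv y \<in> K" "y \<otimes> z \<in> K"
      by (simp_all add: K_def)
  qed
  have a_into_K: "a ` K \<subseteq> K"
  proof
    fix y assume "y \<in> a ` K"
    then obtain z where "z \<in> K" "y = a z" by blast
    then show "y \<in> K"
      using a_involutive[of "b z"] ab_commute[of z] by (simp add: K_def)
  qed
  have a_fixed_point_free: "y = \<one>" if "y \<in> K" "a y = y" for y
    using that common_fixed_point_eq_one a_involutive[of "b y"] by (auto simp: K_def)
  have "x \<in> K" "finite K" "\<And>y. y \<in> K \<Longrightarrow> a (a y) = y"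
    using assms finite_carrier a_involutive by (simp_all add: K_def)
  then show "a x = inv x"
    using inverts_subgroup_if_fixed_point_free_involution[OF a_hom K_subgroup _ a_into_K _ a_fixed_point_free]
    by blast
  then show "b x = inv x"
    using assms a_involutive[of "b x"] by simp
qed

lemma central_if_conjugates_inverted:
  assumes "n \<in> carrier G" "g \<in> carrier G"
    and "\<And>y. y \<in> carrier G \<Longrightarrow> a (inv y \<otimes> n \<otimes> y) = inv (inv y \<otimes> n \<otimes> y)"
    and "\<And>y. y \<in> carrier G \<Longrightarrow> b (inv y \<otimes> n \<otimes> y) = inv (inv y \<otimes> n \<otimes> y)"
  shows "g \<otimes> n = n \<otimes> g"
proof -
  define S where "S = {x \<in> carrier G. inv x \<otimes> n \<otimes> x = inv g \<otimes> n \<otimes> g}"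
  have "card S dvd order G"
    unfolding S_def using assms(1,2) by (rule card_conjugate_fibre_dvd_order)
  then have "odd (card S)"
    using odd_order dvd_trans by blast
  moreover have "finite S"
    using finite_carrier by (simp add: S_def)
  moreover have "a x \<in> S" "b x \<in> S" if "x \<in> S" for x
    using that conj_by_image_eq_if_inverts_conjugates[OF a_hom assms(1) _ assms(3)]
      conj_by_image_eq_if_inverts_conjugates[OF b_hom assms(1) _ assms(4)]
    by (simp_all add: S_def)
  moreover have "a (a x) = x" "b (b x) = x" "a (b x) = b (a x)" if "x \<in> S" for x
    using that a_involutive b_involutive ab_commute by (simp_all add: S_def)
  ultimately have "odd (card {x \<in> S. a x = x \<and> b x = x})"
    using odd_card_iff_odd_card_common_fixed_point_eq_ones[of S a b] by blast
  then have "{x \<in> S. a x = x \<and> b x = x} \<noteq> {}"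
    by (intro notI) simp
  then obtain x where "x \<in> S" "a x = x" "b x = x"
    by blast
  then have "\<one> \<in> S"
    using common_fixed_point_eq_one[of x] by (auto simp: S_def)
  then have "inv g \<otimes> n \<otimes> g = n"
    using assms(1) by (simp add: S_def)
  then show ?thesis
    using conj_eq_self_iff_commute[OF assms(1,2)] by simp
qed

lemma normal_subgroup_central:
  assumes "N \<lhd> G" "\<And>x. x \<in> N \<Longrightarrow> a (b x) = x"
  shows "N \<subseteq> group_center G"
proof
  fix n assume n: "n \<in> N"
  interpret N: normal N G by fact
  have n_carrier: "n \<in> carrier G"
    using n by (rule N.mem_carrier)
  have conjugates_inverted:
    "a (inv y \<otimes> n \<otimes> y) = inv (inv y \<otimes> n \<otimes> y)" "b (inv y \<otimes> n \<otimes> y) = inv (inv y \<otimes> n \<otimes> y)"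
    if "y \<in> carrier G" for y
    using inverts_fixed_points_of_product[OF N.mem_carrier assms(2)] N.inv_op_closed1[OF that n]
    by simp_all
  have "n \<otimes> g = g \<otimes> n" if "g \<in> carrier G" for g
    using central_if_conjugates_inverted[OF n_carrier that conjugates_inverted(1) conjugates_inverted(2)]
    by simp
  then show "n \<in> group_center G"
    using n_carrier by (simp add: group_center_def)
qed

end

lemma fixed_point_free_involutions_of_four_group_action:
  assumes "group G" "finite (carrier G)" "group V"
    and "carrier V = {\<one>\<^bsub>V\<^esub>, v1, v2, v3}" "card (carrier V) = 4"
    and "v1 \<otimes>\<^bsub>V\<^esub> v1 = \<one>\<^bsub>V\<^esub>" "v2 \<otimes>\<^bsub>V\<^esub> v2 = \<one>\<^bsub>V\<^esub>" "v1 \<otimes>\<^bsub>V\<^esub> v2 = v3"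
    and "group_action V (carrier G) \<phi>" "\<forall>v\<in>carrier V. \<phi> v \<in> auto G"
    and "fixed_points G \<phi> (carrier V) = {\<one>\<^bsub>G\<^esub>}"
  shows "fixed_point_free_involutions G (\<phi> v1) (\<phi> v2)"
proof -
  interpret V: group V by fact
  interpret A: group_action V "carrier G" \<phi> by fact
  have v: "v1 \<in> carrier V" "v2 \<in> carrier V"
    using assms(4) by auto
  have v2_v1: "v2 \<otimes>\<^bsub>V\<^esub> v1 = v3"
    using V.klein_four_mult_commute assms(4-8) by blast
  have act: "\<phi> v (\<phi> w x) = \<phi> (v \<otimes>\<^bsub>V\<^esub> w) x" if "v \<in> carrier V" "w \<in> carrier V" "x \<in> carrier G" for v w x
    using A.composition_rule[OF that(3,1,2)] by (rule sym)
  have act_one: "\<phi> \<one>\<^bsub>V\<^esub> x = x" if "x \<in> carrier G" for x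
    using that by (metis A.id_eq_one restrict_apply')
  show ?thesis
  proof (intro fixed_point_free_involutions.intro[OF assms(1)] fixed_point_free_involutions_axioms.intro)
    show "finite (carrier G)" "\<phi> v1 \<in> hom G G" "\<phi> v2 \<in> hom G G"
      using assms(1,2,10) v by (auto simp: auto_def)
    fix x assume x: "x \<in> carrier G"
    show "\<phi> v1 (\<phi> v1 x) = x" "\<phi> v2 (\<phi> v2 x) = x" "\<phi> v1 (\<phi> v2 x) = \<phi> v2 (\<phi> v1 x)"
      using act[OF _ _ x] v x act_one assms(6-8) v2_v1 by simp_all
    assume "\<phi> v1 x = x" "\<phi> v2 x = x"
    then have "x \<in> fixed_points G \<phi> (carrier V)"
      using act[OF v x] x act_one assms(4,8) by (auto simp: fixed_points_def)
    then show "x = \<one>\<^bsub>G\<^esub>"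
      using assms(11) by simp
  qed
qed

theorem lemma4p8:
  fixes G :: "('g, 'c) monoid_scheme" and V :: "('v, 'd) monoid_scheme"
    and \<phi> :: "'v \<Rightarrow> 'g \<Rightarrow> 'g" and v1 v2 v3 :: 'v and N :: "'g set"
  assumes "group G" and "finite (carrier G)"
    and "group V"
    and "carrier V = {\<one>\<^bsub>V\<^esub>, v1, v2, v3}" and "card (carrier V) = 4"
    and "v1 \<otimes>\<^bsub>V\<^esub> v1 = \<one>\<^bsub>V\<^esub>" and "v2 \<otimes>\<^bsub>V\<^esub> v2 = \<one>\<^bsub>V\<^esub>"
    and "v1 \<otimes>\<^bsub>V\<^esub> v2 = v3"
    and "group_action V (carrier G) \<phi>"
    and "\<forall>v\<in>carrier V. \<phi> v \<in> auto G"
    and "fixed_points G \<phi> (carrier V) = {\<one>\<^bsub>G\<^esub>}"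
    and "N \<lhd> G"
    and "N \<subseteq> fixed_points G \<phi> {v3}"
  shows "N \<subseteq> group_center G"
proof -
  interpret fixed_point_free_involutions G "\<phi> v1" "\<phi> v2"
    using assms(1-11) by (rule fixed_point_free_involutions_of_four_group_action)
  have "\<phi> v1 (\<phi> v2 x) = \<phi> v3 x" if "x \<in> carrier G" for x
    using group_action.composition_rule[OF assms(9) that, of v1 v2] assms(4,8) by simp
  then show ?thesis
    using assms(13) by (intro normal_subgroup_central[OF assms(12)]) (auto simp: fixed_points_def)
qed

end
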